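(* For every $N\in\mathbb{N}$, setting $n=2^N$, and every $\epsilon>0$, there exists a qubit state $\rho$ (depending on $n$ and $\epsilon$) such that $$M^{(1)}(\rho)<\frac1n\quad\text{and}\quad \frac{M^{(1)}(\sigma_{(m)})}{M^{(1)}(\rho)}>2^{-\epsilon}\sqrt{n}\quad\text{for all } m\ge\log_2 n,$$ where $\sigma_{(m)}$ is the output of the $m$th step of the concatenation protocol applied to $\rho$.
   Context: Qubit basis $\{|0\rangle,|1\rangle\}$ is the eigenbasis of $L=|1\rangle\langle1|$; $M^{(1)}(\sigma):=|\langle0|\sigma|1\rangle|$ (the trace norm of the first mode $|1\rangle\langle1|\sigma|0\rangle\langle0|$). Concatenation protocol: $\sigma_{(0)}=\rho$ and $\sigma_{(m+1)}=\mathrm{tr}_B\big[U_m(\sigma_{(m)}\otimes\sigma_{(m)})U_m^\dagger\big]$, where, with $p^{(m)}_{00}=\langle0|\sigma_{(m)}|0\rangle$, $U_m$ acts as the identity on $|00\rangle,|11\rangle$ and on $\mathrm{span}\{|01\rangle,|10\rangle\}$ as $|01\rangle\mapsto\cos\theta_m|01\rangle+\sin\theta_m|10\rangle$, $|10\rangle\mapsto-\sin\theta_m|01\rangle+\cos\theta_m|10\rangle$ with $\cos\theta_m=1/\sqrt{1+(2p^{(m)}_{00}-1)^2}$, $\sin\theta_m=(2p^{(m)}_{00}-1)/\sqrt{1+(2p^{(m)}_{00}-1)^2}$. Step $m$ consumes $2^m$ copies of $\rho$. *)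

theory Defs
  imports Complex_Main
begin

text \<open>Qubit basis: False = |0>, True = |1>. A qubit operator is given by its matrix
  entries X i j = <i|X|j>; two-qubit operators are indexed by pairs (a,b) = |ab>
  (first component = system A, second = system B).\<close>

type_synonym qop = "bool \<Rightarrow> bool \<Rightarrow> complex"
type_synonym qop2 = "(bool \<times> bool) \<Rightarrow> (bool \<times> bool) \<Rightarrow> complex"

definition is_qubit_state :: "qop \<Rightarrow> bool" where
  "is_qubit_state \<rho> \<longleftrightarrow>
     (\<forall>i j. \<rho> i j = cnj (\<rho> j i)) \<and>
     (\<forall>v :: bool \<Rightarrow> complex. 0 \<le> Re (\<Sum>i\<in>UNIV. \<Sum>j\<in>UNIV. cnj (v i) * \<rho> i j * v j)) \<and>
     \<rho> False False + \<rho> True True = 1"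

definition tensor :: "qop \<Rightarrow> qop \<Rightarrow> qop2" where
  "tensor X Y = (\<lambda>(a,b) (c,d). X a c * Y b d)"

definition mmult2 :: "qop2 \<Rightarrow> qop2 \<Rightarrow> qop2" where
  "mmult2 X Y = (\<lambda>i j. \<Sum>k\<in>UNIV. X i k * Y k j)"

definition adj2 :: "qop2 \<Rightarrow> qop2" where
  "adj2 X = (\<lambda>i j. cnj (X j i))"

definition ptrace_B :: "qop2 \<Rightarrow> qop" where
  "ptrace_B X = (\<lambda>a c. \<Sum>b\<in>UNIV. X (a,b) (c,b))"

definition rotU :: "real \<Rightarrow> real \<Rightarrow> qop2" where
  "rotU c s = (\<lambda>i j.
     if i = (False,False) \<and> j = (False,False) then 1
     else if i = (True,True) \<and> j = (True,True) then 1
     else if i = (False,True) \<and> j = (False,True) then complex_of_real c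
     else if i = (True,False) \<and> j = (False,True) then complex_of_real s
     else if i = (False,True) \<and> j = (True,False) then complex_of_real (- s)
     else if i = (True,False) \<and> j = (True,False) then complex_of_real c
     else 0)"

definition concat_step :: "qop \<Rightarrow> qop" where
  "concat_step \<sigma> =
     (let p = Re (\<sigma> False False);
          c = 1 / sqrt (1 + (2*p - 1)^2);
          s = (2*p - 1) / sqrt (1 + (2*p - 1)^2);
          U = rotU c s
      in ptrace_B (mmult2 (mmult2 U (tensor \<sigma> \<sigma>)) (adj2 U)))"

primrec concat_sigma :: "qop \<Rightarrow> nat \<Rightarrow> qop" where
  "concat_sigma \<rho> 0 = \<rho>"
| "concat_sigma \<rho> (Suc m) = concat_step (concat_sigma \<rho> m)"

definition M1 :: "qop \<Rightarrow> real" where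
  "M1 \<sigma> = cmod (\<sigma> False True)"

end

theory Submission
  imports Defs
begin

text \<open>Real states \<open>[[p, x], [x, 1 - p]]\<close> are preserved by the protocol, which acts on them by
  \<open>p \<mapsto> p - 2 d x\<^sup>2 / (1 + d\<^sup>2)\<close>, \<open>x \<mapsto> x sqrt (1 + d\<^sup>2)\<close> with \<open>d = 2p - 1\<close>.
  Start close to \<open>|0\<rangle>\<close>: \<open>p = 1 - \<delta>\<close>, \<open>x\<^sup>2 = \<delta>/2\<close>. While the defect \<open>1 - p\<close> is at
  most \<open>\<delta> 2\<^sup>k\<close>, \<open>d\<close> is close to 1, so each of the first \<open>N\<close> steps multiplies \<open>x\<^sup>2\<close> by nearly 2,
  and Bernoulli's inequality bounds the accumulated loss:
  \<open>x\<^sub>N\<^sup>2 \<ge> 2\<^sup>N (1 - 2 N \<delta> 2\<^sup>N) x\<^sup>2\<close>. The coherence \<open>x\<close> never decreases, so the bound persists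
  for all \<open>m \<ge> N\<close>; taking \<open>\<delta>\<close> of order \<open>4\<^sup>-\<^sup>N / N\<close> makes the loss factor as close to 1 as
  desired and \<open>M1 \<rho> < 2\<^sup>-\<^sup>N\<close>.\<close>

definition real_qop :: "real \<Rightarrow> real \<Rightarrow> qop" where
  "real_qop p x = (\<lambda>i j. if i = j then (if i then complex_of_real (1 - p) else complex_of_real p)
                         else complex_of_real x)"

definition concat_params :: "real \<times> real \<Rightarrow> real \<times> real" where
  "concat_params = (\<lambda>(p, x). (p - 2 * (2*p - 1) * x^2 / (1 + (2*p - 1)^2),
                               x * sqrt (1 + (2*p - 1)^2)))"

lemma M1_real_qop: "M1 (real_qop p x) = \<bar>x\<bar>"
  unfolding M1_def real_qop_def by simp

lemma ptrace_B_rotU_real_qop: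
  assumes "c^2 + s^2 = 1"
  shows "ptrace_B (mmult2 (mmult2 (rotU c s) (tensor (real_qop p x) (real_qop p x))) (adj2 (rotU c s)))
           = real_qop (p - 2 * c * s * x^2) (x * (c + s * (2*p - 1)))"
proof -
  have UNIV_bool2: "(UNIV :: (bool \<times> bool) set) = {(False,False), (False,True), (True,False), (True,True)}"
    by auto
  have cs: "complex_of_real c ^ 2 + complex_of_real s ^ 2 = 1"
    using assms by (metis of_real_1 of_real_add of_real_power)
  show ?thesis
    using cs by (intro ext)
      (auto simp: ptrace_B_def mmult2_def adj2_def tensor_def rotU_def real_qop_def UNIV_bool2
        UNIV_bool algebra_simps; algebra)
qed

lemma concat_step_real_qop:
  "concat_step (real_qop p x) = case_prod real_qop (concat_params (p, x))"
proof -
  define d where "d = 2*p - 1"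
  define S where "S = sqrt (1 + d^2)"
  have D_pos: "0 < 1 + d^2"
    by (simp add: add_pos_nonneg)
  then have S_pos: "S > 0" and S_sq: "S^2 = 1 + d^2"
    unfolding S_def by simp_all
  have cs: "(1 / S)^2 + (d / S)^2 = 1"
    using D_pos S_sq by (simp add: power_divide add_divide_distrib [symmetric])
  have cs_prod: "2 * (1 / S) * (d / S) * x^2 = 2 * d * x^2 / (1 + d^2)"
    using S_sq by (simp add: power2_eq_square)
  have c_plus_sd: "1 / S + d / S * d = S"
  proof -
    have "1 / S + d / S * d = S^2 / S"
      unfolding S_sq by (simp add: add_divide_distrib power2_eq_square)
    then show ?thesis
      using S_pos by (simp add: power2_eq_square)
  qed
  have "concat_step (real_qop p x) =
      ptrace_B (mmult2 (mmult2 (rotU (1 / S) (d / S)) (tensor (real_qop p x) (real_qop p x)))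
        (adj2 (rotU (1 / S) (d / S))))"
    unfolding concat_step_def Let_def d_def S_def by (simp add: real_qop_def)
  also have "\<dots> = real_qop (p - 2 * (1 / S) * (d / S) * x^2) (x * (1 / S + d / S * d))"
    using ptrace_B_rotU_real_qop [OF cs] by (simp only: d_def)
  also have "\<dots> = case_prod real_qop (concat_params (p, x))"
    unfolding cs_prod c_plus_sd by (simp add: concat_params_def d_def S_def)
  finally show ?thesis .
qed

lemma concat_sigma_real_qop:
  "concat_sigma (real_qop p x) k = case_prod real_qop ((concat_params ^^ k) (p, x))"
  by (induction k) (simp_all add: concat_step_real_qop split: prod.split)

lemma quadratic_form_nonneg_if_det_nonneg:
  fixes p q t u w :: real
  assumes "0 \<le> p" "0 \<le> q" "t^2 \<le> p * q"
  shows "0 \<le> p * u^2 + q * w^2 + 2 * t * u * w"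
proof (cases "p = 0")
  case True
  with assms have "t = 0"
    by simp
  with True assms show ?thesis
    by simp
next
  case False
  have "p * (p * u^2 + q * w^2 + 2 * t * u * w) = (p * u + t * w)^2 + (p * q - t^2) * w^2"
    by (simp add: algebra_simps power2_eq_square)
  also have "\<dots> \<ge> 0"
    using assms by simp
  finally show ?thesis
    using False assms by (simp add: zero_le_mult_iff)
qed

lemma is_qubit_state_real_qop:
  assumes "0 \<le> p" "p \<le> 1" "x^2 \<le> p * (1 - p)"
  shows "is_qubit_state (real_qop p x)"
  unfolding is_qubit_state_def
proof (intro conjI allI)
  fix v :: "bool \<Rightarrow> complex"
  have "0 \<le> p * (Re (v False))^2 + (1 - p) * (Re (v True))^2 + 2 * x * Re (v False) * Re (v True)"
    and "0 \<le> p * (Im (v False))^2 + (1 - p) * (Im (v True))^2 + 2 * x * Im (v False) * Im (v True)"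
    using quadratic_form_nonneg_if_det_nonneg assms by simp_all
  then show "0 \<le> Re (\<Sum>i\<in>UNIV. \<Sum>j\<in>UNIV. cnj (v i) * real_qop p x i j * v j)"
    by (simp add: UNIV_bool real_qop_def algebra_simps power2_eq_square)
qed (auto simp: real_qop_def)

lemma concat_params_snd_nonneg: "0 \<le> x \<Longrightarrow> 0 \<le> snd ((concat_params ^^ k) (p, x))"
  by (induction k) (auto simp: concat_params_def split: prod.split)

lemma concat_params_snd_incseq:
  assumes "0 \<le> x"
  shows "incseq (\<lambda>k. snd ((concat_params ^^ k) (p, x)))"
proof (rule incseq_SucI)
  fix k
  obtain p' x' where k: "(concat_params ^^ k) (p, x) = (p', x')"
    by fastforce
  have "0 \<le> x'"
    using concat_params_snd_nonneg [OF assms, of k p] k by simp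
  then have "x' * 1 \<le> x' * sqrt (1 + (2*p' - 1)^2)"
    by (intro mult_left_mono) simp_all
  then show "snd ((concat_params ^^ k) (p, x)) \<le> snd ((concat_params ^^ Suc k) (p, x))"
    using k by (simp add: concat_params_def)
qed

lemma concat_params_bounds:
  assumes step: "concat_params (p, x) = (p', x')" and "1/2 \<le> p" "p \<le> 1"
  shows "p - x^2 \<le> p'" "p' \<le> p" "x'^2 \<le> 2 * x^2" "2 * (2*p - 1) * x^2 \<le> x'^2"
proof -
  define d where "d = 2*p - 1"
  have d: "0 \<le> d" "d \<le> 1"
    using assms unfolding d_def by simp_all
  have D_pos: "0 < 1 + d^2"
    by (simp add: add_pos_nonneg)
  have "2 * d \<le> 1 + d^2"
    using zero_le_power2 [of "d - 1"] by (simp add: power2_diff)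
  then have "2 * d * x^2 \<le> (1 + d^2) * x^2"
    by (intro mult_right_mono) simp_all
  then have "2 * d * x^2 / (1 + d^2) \<le> x^2"
    using D_pos by (simp add: divide_le_eq mult.commute)
  moreover have "0 \<le> 2 * d * x^2 / (1 + d^2)"
    using d D_pos by simp
  moreover have "p' = p - 2 * d * x^2 / (1 + d^2)" and x'_sq: "x'^2 = x^2 * (1 + d^2)"
    using step D_pos by (auto simp: concat_params_def d_def power_mult_distrib)
  ultimately show "p - x^2 \<le> p'" "p' \<le> p"
    by linarith+
  have "d^2 \<le> 1"
    using d by (simp add: power_le_one)
  then have "x^2 * (1 + d^2) \<le> x^2 * 2"
    by (intro mult_left_mono) simp_all
  then show "x'^2 \<le> 2 * x^2"
    unfolding x'_sq by (simp add: mult.commute)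
  show "2 * (2*p - 1) * x^2 \<le> x'^2"
    using \<open>2 * d * x^2 \<le> (1 + d^2) * x^2\<close> unfolding x'_sq d_def by (simp add: mult.commute)
qed

lemma concat_params_defect_bound:
  assumes "1 - p \<le> \<delta>" "p \<le> 1" "x^2 \<le> \<delta> / 2" "\<delta> * 2^k \<le> 1/4"
  shows "1 - fst ((concat_params ^^ k) (p, x)) \<le> \<delta> * 2^k \<and> fst ((concat_params ^^ k) (p, x)) \<le> 1
    \<and> snd ((concat_params ^^ k) (p, x))^2 \<le> \<delta> * 2^k / 2"
  using assms(4)
proof (induction k)
  case 0
  then show ?case
    using assms by simp
next
  case (Suc k)
  obtain p' x' where k: "(concat_params ^^ k) (p, x) = (p', x')"
    by fastforce
  obtain p'' x'' where Suc_k: "concat_params (p', x') = (p'', x'')"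
    by fastforce
  have "\<delta> * 2^k \<le> 1/8"
    using Suc.prems by simp
  with Suc.IH k have IH: "1 - p' \<le> \<delta> * 2^k" "p' \<le> 1" "x'^2 \<le> \<delta> * 2^k / 2"
    by simp_all
  then have "1/2 \<le> p'"
    using \<open>\<delta> * 2^k \<le> 1/8\<close> by simp
  note bounds = concat_params_bounds [OF Suc_k this IH(2)]
  show ?case
    using k Suc_k bounds(1-3) IH by simp
qed

lemma concat_params_growth:
  assumes "1 - p \<le> \<delta>" "p \<le> 1" "x^2 \<le> \<delta> / 2" "\<delta> * 2^K \<le> 1/4" "k \<le> K"
  shows "x^2 * (2 * (1 - 2 * \<delta> * 2^K))^k \<le> snd ((concat_params ^^ k) (p, x))^2"
  using assms(5)
proof (induction k)
  case 0
  then show ?case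
    by simp
next
  case (Suc k)
  obtain p' x' where k: "(concat_params ^^ k) (p, x) = (p', x')"
    by fastforce
  obtain p'' x'' where Suc_k: "concat_params (p', x') = (p'', x'')"
    by fastforce
  have "0 \<le> \<delta>"
    using assms(3) zero_le_power2 [of x] by linarith
  then have "\<delta> * 2^k \<le> \<delta> * 2^K"
    using Suc.prems by (intro mult_left_mono power_increasing) simp_all
  then have "1 - p' \<le> \<delta> * 2^K" "p' \<le> 1"
    using concat_params_defect_bound [OF assms(1-3), of k] assms(4) k by simp_all
  then have p'_half: "1/2 \<le> p'" and rate: "1 - 2 * \<delta> * 2^K \<le> 2*p' - 1"
    using assms(4) by simp_all
  have "x^2 * (2 * (1 - 2 * \<delta> * 2^K))^k * (2 * (1 - 2 * \<delta> * 2^K)) \<le> x'^2 * (2 * (2*p' - 1))"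
    using Suc k assms(4) rate by (intro mult_mono) simp_all
  also have "\<dots> \<le> x''^2"
    using concat_params_bounds(4) [OF Suc_k p'_half \<open>p' \<le> 1\<close>] by (simp add: mult.commute)
  finally show ?case
    using k Suc_k by (simp add: ac_simps)
qed

lemma concat_params_amplification:
  assumes "1 - p \<le> \<delta>" "p \<le> 1" "x^2 \<le> \<delta> / 2" "\<delta> * 2^N \<le> 1/4"
  shows "x^2 * 2^N * (1 - real N * (2 * \<delta> * 2^N)) \<le> snd ((concat_params ^^ N) (p, x))^2"
proof -
  define e where "e = 2 * \<delta> * 2^N"
  have "0 \<le> \<delta>"
    using assms(3) zero_le_power2 [of x] by linarith
  then have "0 \<le> e" "e \<le> 1"
    using assms(4) unfolding e_def by simp_all
  then have "1 - real N * e \<le> (1 - e)^N"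
    using Bernoulli_inequality [of "- e" N] by simp
  then have "x^2 * 2^N * (1 - real N * e) \<le> x^2 * 2^N * (1 - e)^N"
    by (intro mult_left_mono) simp_all
  also have "\<dots> = x^2 * (2 * (1 - e))^N"
    unfolding power_mult_distrib by (simp only: mult.assoc)
  also have "\<dots> \<le> snd ((concat_params ^^ N) (p, x))^2"
    using concat_params_growth [OF assms order.refl] unfolding e_def by (simp add: mult.assoc)
  finally show ?thesis
    unfolding e_def .
qed

lemma M1_concat_sigma_real_qop_lower_bound:
  assumes "0 \<le> x" "1 - p \<le> \<delta>" "p \<le> 1" "x^2 \<le> \<delta> / 2" "\<delta> * 2^N \<le> 1/4" "N \<le> m"
  shows "x^2 * 2^N * (1 - real N * (2 * \<delta> * 2^N)) \<le> M1 (concat_sigma (real_qop p x) m)^2"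
proof -
  have "x^2 * 2^N * (1 - real N * (2 * \<delta> * 2^N)) \<le> snd ((concat_params ^^ N) (p, x))^2"
    using assms(2-5) by (rule concat_params_amplification)
  also have "\<dots> \<le> snd ((concat_params ^^ m) (p, x))^2"
    using concat_params_snd_incseq [OF assms(1)] concat_params_snd_nonneg [OF assms(1)] assms(6)
    by (intro power_mono) (simp_all add: incseq_def)
  also have "\<dots> = M1 (concat_sigma (real_qop p x) m)^2"
    unfolding concat_sigma_real_qop by (simp add: M1_real_qop split: prod.split)
  finally show ?thesis .
qed

lemma concat_sigma_amplifies_coherence:
  fixes N :: nat and a :: real
  assumes "0 \<le> a" "a < 1"
  obtains \<rho> where "is_qubit_state \<rho>" "0 < M1 \<rho>" "M1 \<rho> < 1 / 2^N"
    "\<And>m. N \<le> m \<Longrightarrow> a * 2^N * M1 \<rho>^2 < M1 (concat_sigma \<rho> m)^2"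
proof -
  define P :: real where "P = 2^N"
  define \<eta> where "\<eta> = (1 - a) / (4 * (real N + 1))"
  define \<delta> where "\<delta> = \<eta> / P^2"
  define x where "x = sqrt (\<delta> / 2)"
  have P: "1 \<le> P"
    unfolding P_def by simp
  have "2 * real N * \<eta> = (1 - a) * (real N / (2 * (real N + 1)))"
    unfolding \<eta>_def by (simp add: field_simps)
  also have "\<dots> < (1 - a) * 1"
    using assms by (intro mult_strict_left_mono) simp_all
  finally have \<eta>: "0 < \<eta>" "\<eta> \<le> 1/4" "2 * real N * \<eta> < 1 - a"
    using assms unfolding \<eta>_def by (simp_all add: field_simps)
  have "0 < \<delta>" and \<delta>_P_sq: "\<delta> * P^2 = \<eta>"
    using \<eta> P unfolding \<delta>_def by simp_all
  moreover have "\<delta> \<le> \<delta> * P" "\<delta> * P \<le> \<delta> * P^2"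
    using \<open>0 < \<delta>\<close> P by (simp_all add: power2_eq_square)
  moreover have "real N * (2 * \<delta> * P) \<le> real N * (2 * \<eta>)"
    using \<open>\<delta> * P \<le> \<delta> * P^2\<close> \<delta>_P_sq by (intro mult_left_mono) simp_all
  ultimately have \<delta>: "0 < \<delta>" "\<delta> \<le> 1/4" "\<delta> * P \<le> 1/4" "\<delta> * P^2 < 2"
    "real N * (2 * \<delta> * P) < 1 - a"
    using \<eta> by linarith+
  have x: "0 < x" "x^2 = \<delta> / 2"
    unfolding x_def using \<delta> by simp_all
  have "1/2 * \<delta> \<le> (1 - \<delta>) * \<delta>"
    using \<delta> by (intro mult_right_mono) simp_all
  then have "x^2 \<le> (1 - \<delta>) * \<delta>"
    using x by simp
  with \<delta> have "is_qubit_state (real_qop (1 - \<delta>) x)"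
    by (intro is_qubit_state_real_qop) simp_all
  moreover have "x < 1 / P"
  proof (rule power_less_imp_less_base)
    have "x^2 * P^2 = \<delta> * P^2 / 2"
      using x by simp
    with \<delta> have "x^2 * P^2 < 1"
      by linarith
    with P show "x^2 < (1 / P)^2"
      by (simp add: field_simps)
  qed (use P in simp)
  moreover have "a * 2^N * x^2 < M1 (concat_sigma (real_qop (1 - \<delta>) x) m)^2" if "N \<le> m" for m
  proof -
    have "a * 2^N * x^2 < x^2 * 2^N * (1 - real N * (2 * \<delta> * 2^N))"
      using x \<delta> unfolding P_def by (simp add: mult.commute mult.left_commute)
    also have "\<dots> \<le> M1 (concat_sigma (real_qop (1 - \<delta>) x) m)^2"
      using x \<delta> that unfolding P_def by (intro M1_concat_sigma_real_qop_lower_bound) simp_all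
    finally show ?thesis .
  qed
  ultimately show thesis
    using that [of "real_qop (1 - \<delta>) x"] x unfolding P_def by (simp add: M1_real_qop)
qed

theorem mainTheorem4:
  fixes N :: nat and \<epsilon> :: real
  assumes "\<epsilon> > 0"
  shows "\<exists>\<rho>. is_qubit_state \<rho> \<and> M1 \<rho> < 1 / real (2 ^ N) \<and>
           (\<forall>m. m \<ge> log 2 (real (2 ^ N)) \<longrightarrow>
              M1 (concat_sigma \<rho> m) / M1 \<rho> > 2 powr (- \<epsilon>) * sqrt (real (2 ^ N)))"
proof -
  define r where "r = 2 powr (- \<epsilon>) * sqrt (2 ^ N)"
  have a: "0 \<le> 2 powr (-2 * \<epsilon>)" "2 powr (-2 * \<epsilon>) < (1::real)"
    using assms by (simp_all add: powr_less_one)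
  obtain \<rho> where \<rho>: "is_qubit_state \<rho>" "0 < M1 \<rho>" "M1 \<rho> < 1 / 2^N"
    and amplified: "\<And>m. N \<le> m \<Longrightarrow> 2 powr (-2 * \<epsilon>) * 2^N * M1 \<rho>^2 < M1 (concat_sigma \<rho> m)^2"
    using concat_sigma_amplifies_coherence [where N = N, OF a] by blast
  have "r * M1 \<rho> < M1 (concat_sigma \<rho> m)" if "N \<le> m" for m
  proof (rule power_less_imp_less_base)
    have "(2 powr (- \<epsilon>))^2 = 2 powr (-2 * \<epsilon>)"
      by (simp add: power2_eq_square flip: powr_add)
    then show "(r * M1 \<rho>)^2 < M1 (concat_sigma \<rho> m)^2"
      using amplified [OF that] unfolding r_def by (simp add: power_mult_distrib)
  qed (simp add: M1_def)
  then show ?thesis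
    using \<rho> by (intro exI [of _ \<rho>]) (simp add: r_def pos_less_divide_eq)
qed

end
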